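(* A group $G$ admits a nonzero homogeneous quasimorphism if and only if $G$ acts dominatingly on some quasi-total triple $(X,\preceq,T)$ (the action is not required to be effective, and the triple is not required to be complete).
   Context: A homogeneous quasimorphism is $f:G\to\mathbb{R}$ with $\sup_{h,k}|f(hk)-f(h)-f(k)|<\infty$ and $f(h^n)=nf(h)$ for $n\in\mathbb{N}$. For a poset $(X,\preceq)$, an order-preserving bijection $T$ is dominant if for all $a,b\in X$ there is $n\in\mathbb{N}$ with $T^na\succ b$. $(X,\preceq,T)$ is a quasi-total triple if $T$ is a dominant order-preserving bijection of $X$ and there is $N\in\mathbb{N}$ such that for all $a,b\in X$ some $k\in\{0,\dots,N\}$ satisfies $a\preceq T^kb$ or $b\preceq T^ka$. An action of $G$ on $(X,\preceq,T)$ is dominating if $G$ acts by order-preserving bijections commuting with $T$ and there exist $g\in G$, $x\in X$, $n\in\mathbb{N}$ with $g.x\succeq T^n.x$. *)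

theory Defs
  imports Complex_Main "HOL-Algebra.Group_Action"
begin

definition hom_quasimorphism :: "('g, 'b) monoid_scheme \<Rightarrow> ('g \<Rightarrow> real) \<Rightarrow> bool" where
  "hom_quasimorphism G f \<longleftrightarrow>
     (\<exists>D. \<forall>h\<in>carrier G. \<forall>k\<in>carrier G. \<bar>f (h \<otimes>\<^bsub>G\<^esub> k) - f h - f k\<bar> \<le> D) \<and>
     (\<forall>h\<in>carrier G. \<forall>n::nat. n \<ge> 1 \<longrightarrow> f (h [^]\<^bsub>G\<^esub> n) = real n * f h)"

definition poset_on :: "'x set \<Rightarrow> ('x \<Rightarrow> 'x \<Rightarrow> bool) \<Rightarrow> bool" where
  "poset_on X leq \<longleftrightarrow>
     (\<forall>a\<in>X. leq a a) \<and>
     (\<forall>a\<in>X. \<forall>b\<in>X. leq a b \<and> leq b a \<longrightarrow> a = b) \<and>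
     (\<forall>a\<in>X. \<forall>b\<in>X. \<forall>c\<in>X. leq a b \<and> leq b c \<longrightarrow> leq a c)"

definition order_preserving_bij :: "'x set \<Rightarrow> ('x \<Rightarrow> 'x \<Rightarrow> bool) \<Rightarrow> ('x \<Rightarrow> 'x) \<Rightarrow> bool" where
  "order_preserving_bij X leq T \<longleftrightarrow>
     bij_betw T X X \<and> (\<forall>a\<in>X. \<forall>b\<in>X. leq a b \<longrightarrow> leq (T a) (T b))"

definition dominant :: "'x set \<Rightarrow> ('x \<Rightarrow> 'x \<Rightarrow> bool) \<Rightarrow> ('x \<Rightarrow> 'x) \<Rightarrow> bool" where
  "dominant X leq T \<longleftrightarrow>
     (\<forall>a\<in>X. \<forall>b\<in>X. \<exists>n::nat. leq b ((T ^^ n) a) \<and> (T ^^ n) a \<noteq> b)"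

definition quasi_total_triple :: "'x set \<Rightarrow> ('x \<Rightarrow> 'x \<Rightarrow> bool) \<Rightarrow> ('x \<Rightarrow> 'x) \<Rightarrow> bool" where
  "quasi_total_triple X leq T \<longleftrightarrow>
     poset_on X leq \<and> order_preserving_bij X leq T \<and> dominant X leq T \<and>
     (\<exists>N::nat. \<forall>a\<in>X. \<forall>b\<in>X. \<exists>k\<in>{0..N}. leq a ((T ^^ k) b) \<or> leq b ((T ^^ k) a))"

definition dominating_action ::
  "('g, 'b) monoid_scheme \<Rightarrow> ('g \<Rightarrow> 'x \<Rightarrow> 'x) \<Rightarrow> 'x set \<Rightarrow> ('x \<Rightarrow> 'x \<Rightarrow> bool) \<Rightarrow> ('x \<Rightarrow> 'x) \<Rightarrow> bool" where
  "dominating_action G act X leq T \<longleftrightarrow>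
     group_action G X act \<and>
     (\<forall>g\<in>carrier G. order_preserving_bij X leq (act g)) \<and>
     (\<forall>g\<in>carrier G. \<forall>x\<in>X. act g (T x) = T (act g x)) \<and>
     (\<exists>g\<in>carrier G. \<exists>x\<in>X. \<exists>n::nat. n \<ge> 1 \<and> leq ((T ^^ n) x) (act g x))"

end

theory Submission
  imports Defs
begin

text \<open>If $f$ is a homogeneous quasimorphism of defect at most $D$ and $f(h) \neq 0$, then $G$
  itself is a quasi-total triple: put $x \preceq y$ iff $x = y$ or $f(x^{-1}y) > D$, let $T$ be
  right multiplication by some $z$ with $f(z) > 2D$, and let $G$ act by left multiplication.
  Conjugation invariance of $f$ makes $T$ order preserving, and $f(z) > 2D$ gives quasi-totality
  with $N = 1$.

  Conversely, given a dominating action on $(X, \preceq, T)$, measure how many steps of $T$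
  separate two points: the resulting displacement $d(a, b)$ is quasi-additive up to a constant
  depending only on $N$ and is invariant under the action. Hence $g \mapsto d(x, g.x)$ is a
  quasimorphism, it grows linearly along the powers of the dominating element, and its
  homogenization is a nonzero homogeneous quasimorphism.\<close>

lemma convergent_of_mutual_bound:
  fixes s c :: "nat \<Rightarrow> real"
  assumes c: "c \<longlonglongrightarrow> 0" and bound: "\<And>m n. \<bar>s m - s n\<bar> \<le> c m + c n"
  shows "convergent s" and "\<bar>s n - lim s\<bar> \<le> c n"
proof -
  have "Cauchy s"
  proof (rule CauchyI)
    fix e :: real assume "0 < e"
    then obtain M where M: "\<forall>n\<ge>M. c n < e / 2"
      using order_tendstoD(2)[OF c, of "e / 2"] by (auto simp: eventually_sequentially)
    have "norm (s m - s n) < e" if "m \<ge> M" "n \<ge> M" for m n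
    proof -
      have "c m < e / 2" "c n < e / 2"
        using M that by auto
      then show ?thesis
        using bound[of m n] by simp
    qed
    then show "\<exists>M. \<forall>m\<ge>M. \<forall>n\<ge>M. norm (s m - s n) < e"
      by blast
  qed
  then show conv: "convergent s"
    by (simp add: Cauchy_convergent_iff)
  have "(\<lambda>m. \<bar>s n - s m\<bar>) \<longlonglongrightarrow> \<bar>s n - lim s\<bar>"
    using conv by (intro tendsto_intros) (simp add: convergent_LIMSEQ_iff)
  moreover have "(\<lambda>m. c n + c m) \<longlonglongrightarrow> c n + 0"
    using c by (intro tendsto_intros)
  ultimately show "\<bar>s n - lim s\<bar> \<le> c n"
    using bound by (intro LIMSEQ_le) auto
qed

lemma eq_0_if_mult_bounded:
  fixes x B :: real
  assumes "\<And>n::nat. n \<ge> 1 \<Longrightarrow> real n * \<bar>x\<bar> \<le> B"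
  shows "x = 0"
proof (rule ccontr)
  assume "x \<noteq> 0"
  then obtain n :: nat where n: "B < real n * \<bar>x\<bar>"
    using ex_less_of_nat_mult[of "\<bar>x\<bar>"] by auto
  have "real n * \<bar>x\<bar> \<le> real (Suc n) * \<bar>x\<bar>"
    by (simp add: mult_right_mono)
  then show False
    using assms[of "Suc n"] n by simp
qed

lemma abs_diff_divide_le:
  fixes p x a b E :: real
  assumes "\<bar>p - b * x\<bar> \<le> b * E" and "0 < a" and "0 < b"
  shows "\<bar>p / (a * b) - x / a\<bar> \<le> E / a"
proof -
  have "\<bar>p / (a * b) - x / a\<bar> = \<bar>p - b * x\<bar> / (a * b)"
    using assms(2,3) by (simp add: field_simps)
  also have "\<dots> \<le> b * E / (a * b)"
    using assms by (intro divide_right_mono) auto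
  also have "\<dots> = E / a"
    using assms(3) by simp
  finally show ?thesis .
qed

locale quasimorphism = group +
  fixes q :: "'a \<Rightarrow> real" and D :: real
  assumes defect: "h \<in> carrier G \<Longrightarrow> k \<in> carrier G \<Longrightarrow> \<bar>q (h \<otimes> k) - q h - q k\<bar> \<le> D"
begin

lemma defect_nonneg: "0 \<le> D"
  using defect[OF one_closed one_closed] by linarith

lemma q_mult_ge: "h \<in> carrier G \<Longrightarrow> k \<in> carrier G \<Longrightarrow> q h + q k - D \<le> q (h \<otimes> k)"
  using defect by fastforce

lemma pow_defect:
  assumes "g \<in> carrier G"
  shows "\<bar>q (g [^] n) - real n * q g\<bar> \<le> (real n + 1) * D"
proof (induction n)
  case 0
  then show ?case
    using defect[OF one_closed one_closed] by simp
next
  case (Suc n)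
  have "\<bar>q (g [^] n \<otimes> g) - q (g [^] n) - q g\<bar> \<le> D"
    using assms by (simp add: defect)
  with Suc show ?case
    by (simp add: algebra_simps)
qed

definition homog_seq :: "'a \<Rightarrow> nat \<Rightarrow> real" where
  "homog_seq g n = q (g [^] Suc n) / real (Suc n)"

definition homogenization :: "'a \<Rightarrow> real" where
  "homogenization g = lim (homog_seq g)"

lemma homog_seq_approx:
  assumes g: "g \<in> carrier G"
  shows "\<bar>q (g [^] (Suc n * Suc m)) / real (Suc n * Suc m) - homog_seq g n\<bar>
           \<le> 2 * D / real (Suc n)"
proof -
  let ?b = "real (Suc m)" and ?p = "q (g [^] (Suc n * Suc m))"
  have "\<bar>q ((g [^] Suc n) [^] Suc m) - ?b * q (g [^] Suc n)\<bar> \<le> (?b + 1) * D"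
    using g by (intro pow_defect) simp
  also have "\<dots> \<le> ?b * (2 * D)"
    using defect_nonneg by (simp add: algebra_simps)
  finally have bound: "\<bar>?p - ?b * q (g [^] Suc n)\<bar> \<le> ?b * (2 * D)"
    by (simp only: nat_pow_pow[OF g])
  then show ?thesis
    unfolding homog_seq_def of_nat_mult by (intro abs_diff_divide_le) auto
qed

lemma homog_seq_mutual_bound:
  assumes "g \<in> carrier G"
  shows "\<bar>homog_seq g m - homog_seq g n\<bar> \<le> 2 * D / real (Suc m) + 2 * D / real (Suc n)"
  using homog_seq_approx[OF assms, of m n] homog_seq_approx[OF assms, of n m]
  unfolding mult.commute[of "Suc n" "Suc m"] by linarith

lemma homog_seq_limit:
  assumes "g \<in> carrier G"
  shows "homog_seq g \<longlonglongrightarrow> homogenization g"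
    and "\<bar>homog_seq g n - homogenization g\<bar> \<le> 2 * D / real (Suc n)"
proof -
  have decay: "(\<lambda>n. 2 * D / real (Suc n)) \<longlonglongrightarrow> 0"
    using LIMSEQ_Suc[OF lim_const_over_n[of "2 * D"]] by simp
  show "homog_seq g \<longlonglongrightarrow> homogenization g"
    using convergent_of_mutual_bound(1)[OF decay homog_seq_mutual_bound[OF assms]]
    unfolding homogenization_def by (simp add: convergent_LIMSEQ_iff)
  show "\<bar>homog_seq g n - homogenization g\<bar> \<le> 2 * D / real (Suc n)"
    using convergent_of_mutual_bound(2)[OF decay homog_seq_mutual_bound[OF assms]]
    unfolding homogenization_def .
qed

lemma homogenization_close: "g \<in> carrier G \<Longrightarrow> \<bar>q g - homogenization g\<bar> \<le> 2 * D"
  using homog_seq_limit(2)[of g 0] by (simp add: homog_seq_def)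

lemma homogenization_pow:
  assumes g: "g \<in> carrier G" and k: "1 \<le> k"
  shows "homogenization (g [^] k) = real k * homogenization g"
proof -
  let ?r = "\<lambda>n. k * Suc n - 1"
  have r: "Suc (?r n) = k * Suc n" for n
    using k by (simp add: Suc_diff_1)
  have "strict_mono ?r"
    using k by (intro strict_monoI) (simp add: diff_less_mono)
  then have "(\<lambda>n. real k * homog_seq g (?r n)) \<longlonglongrightarrow> real k * homogenization g"
    using LIMSEQ_subseq_LIMSEQ[OF homog_seq_limit(1)[OF g]]
    by (intro tendsto_mult_left) (simp add: o_def)
  moreover have "homog_seq (g [^] k) = (\<lambda>n. real k * homog_seq g (?r n))"
  proof
    fix n
    have "homog_seq (g [^] k) n = q (g [^] (k * Suc n)) / real (Suc n)"
      unfolding homog_seq_def by (simp only: nat_pow_pow[OF g])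
    also have "\<dots> = real k * (q (g [^] Suc (?r n)) / real (Suc (?r n)))"
      using k unfolding r of_nat_mult by simp
    finally show "homog_seq (g [^] k) n = real k * homog_seq g (?r n)"
      unfolding homog_seq_def .
  qed
  ultimately have "homog_seq (g [^] k) \<longlonglongrightarrow> real k * homogenization g"
    by simp
  then show ?thesis
    using LIMSEQ_unique homog_seq_limit(1)[of "g [^] k"] g by blast
qed

lemma hom_quasimorphism_homogenization: "hom_quasimorphism G homogenization"
  unfolding hom_quasimorphism_def
proof (intro conjI exI ballI allI impI)
  fix h k assume h: "h \<in> carrier G" and k: "k \<in> carrier G"
  have "\<bar>q (h \<otimes> k) - homogenization (h \<otimes> k)\<bar> \<le> 2 * D"
    "\<bar>q h - homogenization h\<bar> \<le> 2 * D" "\<bar>q k - homogenization k\<bar> \<le> 2 * D"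
    using homogenization_close h k by simp_all
  then show "\<bar>homogenization (h \<otimes> k) - homogenization h - homogenization k\<bar> \<le> 7 * D"
    using defect[OF h k] by linarith
next
  fix h and n :: nat assume "h \<in> carrier G" "1 \<le> n"
  then show "homogenization (h [^] n) = real n * homogenization h"
    by (rule homogenization_pow)
qed

lemma homogenization_nonzero:
  assumes g: "g \<in> carrier G" and c: "0 < c" and growth: "\<And>k. real k * c - B \<le> q (g [^] k)"
  shows "homogenization g \<noteq> 0"
proof
  assume "homogenization g = 0"
  have "q (g [^] Suc k) \<le> 2 * D" for k
  proof -
    have "homogenization (g [^] Suc k) = 0"
      using homogenization_pow[OF g, of "Suc k"] \<open>homogenization g = 0\<close> by (simp del: nat_pow_Suc)
    moreover have "\<bar>q (g [^] Suc k) - homogenization (g [^] Suc k)\<bar> \<le> 2 * D"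
      using g by (intro homogenization_close) simp
    ultimately show ?thesis
      by linarith
  qed
  moreover obtain k :: nat where "B + 2 * D < real k * c"
    using ex_less_of_nat_mult[OF c] by blast
  moreover have "real k * c \<le> real (Suc k) * c"
    using c by simp
  ultimately show False
    using growth[of "Suc k"] by (smt (verit))
qed

end

lemma (in group) m_inv_cancel_left: "x \<in> carrier G \<Longrightarrow> y \<in> carrier G \<Longrightarrow> x \<otimes> (inv x \<otimes> y) = y"
  by (simp flip: m_assoc)

lemma (in group) inv_m_cancel_left: "x \<in> carrier G \<Longrightarrow> y \<in> carrier G \<Longrightarrow> inv x \<otimes> (x \<otimes> y) = y"
  by (simp flip: m_assoc)

lemma (in group) left_mult_group_action:
  "group_action G (carrier G) (\<lambda>g. \<lambda>x\<in>carrier G. g \<otimes> x)"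
  unfolding group_action_def group_hom_def group_hom_axioms_def hom_def
proof (intro conjI CollectI ballI funcsetI)
  show "group G" "group (BijGroup (carrier G))"
    by (simp_all add: is_group group_BijGroup)
  have bij: "(\<lambda>x\<in>carrier G. g \<otimes> x) \<in> Bij (carrier G)" if "g \<in> carrier G" for g
    unfolding Bij_def using that
    by (auto intro!: bij_betwI[where g = "\<lambda>x. inv g \<otimes> x"] simp: inv_m_cancel_left m_inv_cancel_left)
  then show "(\<lambda>x\<in>carrier G. g \<otimes> x) \<in> carrier (BijGroup (carrier G))" if "g \<in> carrier G" for g
    using that by (simp add: BijGroup_def)
  show "(\<lambda>x\<in>carrier G. (g \<otimes> h) \<otimes> x)
      = (\<lambda>x\<in>carrier G. g \<otimes> x) \<otimes>\<^bsub>BijGroup (carrier G)\<^esub> (\<lambda>x\<in>carrier G. h \<otimes> x)"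
    if "g \<in> carrier G" "h \<in> carrier G" for g h
    using that bij by (auto simp: BijGroup_def compose_def m_assoc intro!: restrict_ext)
qed

locale homogeneous_quasimorphism = quasimorphism +
  assumes homogeneous: "g \<in> carrier G \<Longrightarrow> 1 \<le> n \<Longrightarrow> q (g [^] n) = real n * q g"

lemma (in group) hom_quasimorphism_iff:
  "hom_quasimorphism G f \<longleftrightarrow> (\<exists>D. homogeneous_quasimorphism G f D)"
  unfolding hom_quasimorphism_def homogeneous_quasimorphism_def quasimorphism_def
    homogeneous_quasimorphism_axioms_def quasimorphism_axioms_def
  using is_group by blast

context homogeneous_quasimorphism
begin

lemma q_one: "q \<one> = 0"
  using homogeneous[of \<one> 2] by simp

lemma q_pow: "g \<in> carrier G \<Longrightarrow> q (g [^] (n::nat)) = real n * q g"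
  using homogeneous[of g n] q_one by (cases "n = 0") auto

lemma q_inv:
  assumes g: "g \<in> carrier G"
  shows "q (inv g) = - q g"
proof -
  have "real n * \<bar>q g + q (inv g)\<bar> \<le> D" for n :: nat
  proof -
    have "g [^] n \<otimes> inv g [^] n = \<one>"
      using g by (simp add: nat_pow_inv)
    then have "\<bar>- (real n * q g) - real n * q (inv g)\<bar> \<le> D"
      using defect[of "g [^] n" "inv g [^] n"] g q_one by (simp add: q_pow)
    moreover have "- (real n * q g) - real n * q (inv g) = - (real n * (q g + q (inv g)))"
      by (simp add: algebra_simps)
    ultimately show ?thesis
      by (simp add: abs_mult)
  qed
  then have "q g + q (inv g) = 0"
    by (intro eq_0_if_mult_bounded)
  then show ?thesis
    by linarith
qed

lemma conj_pow:
  assumes "z \<in> carrier G" "w \<in> carrier G"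
  shows "(inv z \<otimes> w \<otimes> z) [^] (n::nat) = inv z \<otimes> w [^] n \<otimes> z"
proof (induction n)
  case (Suc n)
  have "(inv z \<otimes> w \<otimes> z) [^] Suc n = (inv z \<otimes> w [^] n \<otimes> z) \<otimes> (inv z \<otimes> w \<otimes> z)"
    using Suc by simp
  also have "\<dots> = inv z \<otimes> w [^] Suc n \<otimes> z"
    using assms by (simp add: m_assoc m_inv_cancel_left)
  finally show ?case .
qed (use assms in simp)

lemma q_conj:
  assumes z: "z \<in> carrier G" and w: "w \<in> carrier G"
  shows "q (inv z \<otimes> w \<otimes> z) = q w"
proof -
  have "real n * \<bar>q (inv z \<otimes> w \<otimes> z) - q w\<bar> \<le> 2 * D" for n :: nat
  proof -
    have "\<bar>q (inv z \<otimes> w [^] n \<otimes> z) - q (inv z \<otimes> w [^] n) - q z\<bar> \<le> D"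
      and "\<bar>q (inv z \<otimes> w [^] n) - q (inv z) - q (w [^] n)\<bar> \<le> D"
      using z w by (simp_all add: defect)
    moreover have "q (inv z \<otimes> w [^] n \<otimes> z) = real n * q (inv z \<otimes> w \<otimes> z)"
      using conj_pow[OF z w, of n, symmetric] z w by (simp add: q_pow)
    ultimately have "\<bar>real n * q (inv z \<otimes> w \<otimes> z) - real n * q w\<bar> \<le> 2 * D"
      using q_pow[OF w] q_inv[OF z] by (smt (verit))
    then show ?thesis
      by (simp add: abs_mult flip: right_diff_distrib)
  qed
  then have "q (inv z \<otimes> w \<otimes> z) - q w = 0"
    by (intro eq_0_if_mult_bounded)
  then show ?thesis
    by simp
qed

lemma q_inv_mult_swap:
  "a \<in> carrier G \<Longrightarrow> b \<in> carrier G \<Longrightarrow> q (inv b \<otimes> a) = - q (inv a \<otimes> b)"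
  using q_inv[of "inv a \<otimes> b"] by (simp add: inv_mult_group)

lemma exists_q_gt:
  assumes h: "h \<in> carrier G" and "q h \<noteq> 0"
  obtains z where "z \<in> carrier G" and "C < q z"
proof -
  define h' where "h' = (if 0 < q h then h else inv h)"
  have h': "h' \<in> carrier G" "0 < q h'"
    using h assms(2) q_inv[OF h] unfolding h'_def by auto
  obtain n :: nat where "C < real n * q h'"
    using ex_less_of_nat_mult[OF h'(2)] by blast
  then show ?thesis
    using that[of "h' [^] n"] h' q_pow by simp
qed

definition qm_le :: "'a \<Rightarrow> 'a \<Rightarrow> bool" where
  "qm_le x y \<longleftrightarrow> x = y \<or> D < q (inv x \<otimes> y)"

lemma poset_on_qm_le: "poset_on (carrier G) qm_le"
  unfolding poset_on_def
proof (intro conjI ballI impI)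
  fix a b assume ab: "a \<in> carrier G" "b \<in> carrier G" and "qm_le a b \<and> qm_le b a"
  then show "a = b"
    using q_inv_mult_swap[OF ab] defect_nonneg unfolding qm_le_def by force
next
  fix a b c assume abc: "a \<in> carrier G" "b \<in> carrier G" "c \<in> carrier G"
    and le: "qm_le a b \<and> qm_le b c"
  show "qm_le a c"
  proof (cases "a = b \<or> b = c")
    case False
    then have "D < q (inv a \<otimes> b)" "D < q (inv b \<otimes> c)"
      using le unfolding qm_le_def by auto
    moreover have "inv a \<otimes> c = (inv a \<otimes> b) \<otimes> (inv b \<otimes> c)"
      using abc by (simp add: m_assoc m_inv_cancel_left)
    ultimately show ?thesis
      using q_mult_ge[of "inv a \<otimes> b" "inv b \<otimes> c"] abc defect_nonneg unfolding qm_le_def by simp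
  qed (use le in auto)
qed (simp add: qm_le_def)

lemma qm_le_left_mult:
  assumes "g \<in> carrier G" "a \<in> carrier G" "b \<in> carrier G" "qm_le a b"
  shows "qm_le (g \<otimes> a) (g \<otimes> b)"
proof -
  have "inv (g \<otimes> a) \<otimes> (g \<otimes> b) = inv a \<otimes> b"
    using assms by (simp add: inv_mult_group m_assoc inv_m_cancel_left)
  then show ?thesis
    using assms(4) unfolding qm_le_def by auto
qed

lemma qm_le_right_mult:
  assumes "z \<in> carrier G" "a \<in> carrier G" "b \<in> carrier G" "qm_le a b"
  shows "qm_le (a \<otimes> z) (b \<otimes> z)"
proof -
  have "inv (a \<otimes> z) \<otimes> (b \<otimes> z) = inv z \<otimes> (inv a \<otimes> b) \<otimes> z"
    using assms by (simp add: inv_mult_group m_assoc)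
  then show ?thesis
    using assms q_conj unfolding qm_le_def by auto
qed

lemma qm_le_right_mult_large:
  assumes "x \<in> carrier G" "y \<in> carrier G" "z \<in> carrier G"
    and "0 \<le> q (inv y \<otimes> x)" and "2 * D < q z"
  shows "qm_le y (x \<otimes> z)"
proof -
  have "q (inv y \<otimes> x) + q z - D \<le> q (inv y \<otimes> (x \<otimes> z))"
    using q_mult_ge[of "inv y \<otimes> x" z] assms(1-3) by (simp add: m_assoc)
  then show ?thesis
    using assms(4,5) unfolding qm_le_def by simp
qed

lemma right_mult_iter:
  "x \<in> carrier G \<Longrightarrow> z \<in> carrier G \<Longrightarrow> ((\<lambda>x. x \<otimes> z) ^^ n) x = x \<otimes> z [^] n"
  by (induction n) (auto simp: m_assoc)

lemma dominant_right_mult: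
  assumes z: "z \<in> carrier G" and qz: "0 < q z"
  shows "dominant (carrier G) qm_le (\<lambda>x. x \<otimes> z)"
  unfolding dominant_def
proof (intro ballI)
  fix a b assume ab: "a \<in> carrier G" "b \<in> carrier G"
  obtain n :: nat where n: "2 * D - q (inv b \<otimes> a) < real n * q z"
    using ex_less_of_nat_mult[OF qz] by blast
  have "q (inv b \<otimes> a) + q (z [^] n) - D \<le> q (inv b \<otimes> (a \<otimes> z [^] n))"
    using q_mult_ge[of "inv b \<otimes> a" "z [^] n"] ab z by (simp add: m_assoc)
  then have big: "D < q (inv b \<otimes> (a \<otimes> z [^] n))"
    using n q_pow[OF z] by simp
  moreover have "a \<otimes> z [^] n \<noteq> b"
    using big ab q_one defect_nonneg by auto
  ultimately show "\<exists>n. qm_le b (((\<lambda>x. x \<otimes> z) ^^ n) a) \<and> ((\<lambda>x. x \<otimes> z) ^^ n) a \<noteq> b"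
    using ab(1) unfolding qm_le_def right_mult_iter[OF ab(1) z] by blast
qed

lemma quasi_total_triple_right_mult:
  assumes z: "z \<in> carrier G" and qz: "2 * D < q z"
  shows "quasi_total_triple (carrier G) qm_le (\<lambda>x. x \<otimes> z)"
  unfolding quasi_total_triple_def
proof (intro conjI)
  show "poset_on (carrier G) qm_le"
    by (rule poset_on_qm_le)
  have "bij_betw (\<lambda>x. x \<otimes> z) (carrier G) (carrier G)"
    by (rule bij_betwI[where g = "\<lambda>x. x \<otimes> inv z"]) (auto simp: z m_assoc)
  then show "order_preserving_bij (carrier G) qm_le (\<lambda>x. x \<otimes> z)"
    unfolding order_preserving_bij_def using qm_le_right_mult[OF z] by blast
  show "dominant (carrier G) qm_le (\<lambda>x. x \<otimes> z)"
    using dominant_right_mult[OF z] qz defect_nonneg by simp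
  have "\<exists>k\<in>{0..1::nat}. qm_le a (((\<lambda>x. x \<otimes> z) ^^ k) b) \<or> qm_le b (((\<lambda>x. x \<otimes> z) ^^ k) a)"
    if ab: "a \<in> carrier G" "b \<in> carrier G" for a b
  proof (cases "0 \<le> q (inv b \<otimes> a)")
    case True
    then show ?thesis
      using qm_le_right_mult_large[OF ab(1,2) z _ qz] by (intro bexI[of _ 1]) auto
  next
    case False
    then show ?thesis
      using qm_le_right_mult_large[OF ab(2,1) z _ qz] q_inv_mult_swap[OF ab]
      by (intro bexI[of _ 1]) auto
  qed
  then show "\<exists>N::nat. \<forall>a\<in>carrier G. \<forall>b\<in>carrier G. \<exists>k\<in>{0..N}.
      qm_le a (((\<lambda>x. x \<otimes> z) ^^ k) b) \<or> qm_le b (((\<lambda>x. x \<otimes> z) ^^ k) a)"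
    by blast
qed

lemma dominating_action_left_mult:
  assumes z: "z \<in> carrier G"
  shows "dominating_action G (\<lambda>g. \<lambda>x\<in>carrier G. g \<otimes> x) (carrier G) qm_le (\<lambda>x. x \<otimes> z)"
  unfolding dominating_action_def
proof (intro conjI ballI)
  show action: "group_action G (carrier G) (\<lambda>g. \<lambda>x\<in>carrier G. g \<otimes> x)"
    by (rule left_mult_group_action)
  fix g assume g: "g \<in> carrier G"
  show "order_preserving_bij (carrier G) qm_le (\<lambda>x\<in>carrier G. g \<otimes> x)"
    unfolding order_preserving_bij_def
    using group_action.bij_prop0[OF action g] qm_le_left_mult[OF g] by (simp add: Bij_def)
  show "(\<lambda>x\<in>carrier G. g \<otimes> x) (x \<otimes> z) = (\<lambda>x\<in>carrier G. g \<otimes> x) x \<otimes> z" if "x \<in> carrier G" for x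
    using g z that by (simp add: m_assoc)
next
  have "qm_le (((\<lambda>x. x \<otimes> z) ^^ 1) \<one>) ((\<lambda>x\<in>carrier G. z \<otimes> x) \<one>)"
    using z by (simp add: qm_le_def)
  then show "\<exists>g\<in>carrier G. \<exists>x\<in>carrier G. \<exists>n::nat. 1 \<le> n \<and>
      qm_le (((\<lambda>x. x \<otimes> z) ^^ n) x) ((\<lambda>x\<in>carrier G. g \<otimes> x) x)"
    using z by blast
qed

end

lemma (in group) nonzero_hom_quasimorphism_imp_dominating_action:
  assumes "hom_quasimorphism G f" and "h \<in> carrier G" and "f h \<noteq> 0"
  shows "\<exists>leq T act. quasi_total_triple (carrier G) leq T \<and> dominating_action G act (carrier G) leq T"
proof -
  obtain D where "homogeneous_quasimorphism G f D"
    using assms(1) hom_quasimorphism_iff by blast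
  then interpret homogeneous_quasimorphism G f D .
  obtain z where "z \<in> carrier G" and "2 * D < f z"
    using exists_q_gt[OF assms(2,3)] by blast
  then show ?thesis
    using quasi_total_triple_right_mult dominating_action_left_mult by blast
qed

locale qt_triple =
  fixes X :: "'x set" and leq :: "'x \<Rightarrow> 'x \<Rightarrow> bool" and T :: "'x \<Rightarrow> 'x" and N :: nat
  assumes refl: "a \<in> X \<Longrightarrow> leq a a"
    and antisym: "a \<in> X \<Longrightarrow> b \<in> X \<Longrightarrow> leq a b \<Longrightarrow> leq b a \<Longrightarrow> a = b"
    and trans: "a \<in> X \<Longrightarrow> b \<in> X \<Longrightarrow> c \<in> X \<Longrightarrow> leq a b \<Longrightarrow> leq b c \<Longrightarrow> leq a c"
    and T_closed: "a \<in> X \<Longrightarrow> T a \<in> X"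
    and T_mono: "a \<in> X \<Longrightarrow> b \<in> X \<Longrightarrow> leq a b \<Longrightarrow> leq (T a) (T b)"
    and dominant: "a \<in> X \<Longrightarrow> b \<in> X \<Longrightarrow> \<exists>n. leq b ((T ^^ n) a) \<and> (T ^^ n) a \<noteq> b"
    and quasi_total: "a \<in> X \<Longrightarrow> b \<in> X \<Longrightarrow> \<exists>k\<le>N. leq a ((T ^^ k) b) \<or> leq b ((T ^^ k) a)"

lemma quasi_total_triple_imp_qt_triple:
  assumes "quasi_total_triple X leq T"
  obtains N where "qt_triple X leq T N"
proof -
  obtain N where N: "\<forall>a\<in>X. \<forall>b\<in>X. \<exists>k\<in>{0..N}. leq a ((T ^^ k) b) \<or> leq b ((T ^^ k) a)"
    using assms unfolding quasi_total_triple_def by blast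
  have "poset_on X leq" and T: "order_preserving_bij X leq T" and "dominant X leq T"
    using assms unfolding quasi_total_triple_def by auto
  then have "qt_triple X leq T N"
    unfolding qt_triple_def poset_on_def dominant_def
  proof (intro conjI allI impI; (elim conjE)?)
    show "T a \<in> X" if "a \<in> X" for a
      using T that unfolding order_preserving_bij_def by (meson bij_betw_apply)
    show "leq (T a) (T b)" if "a \<in> X" "b \<in> X" "leq a b" for a b
      using T that unfolding order_preserving_bij_def by blast
    show "\<exists>k\<le>N. leq a ((T ^^ k) b) \<or> leq b ((T ^^ k) a)" if "a \<in> X" "b \<in> X" for a b
      using N that by fastforce
  qed blast+
  then show ?thesis
    using that by blast
qed

context qt_triple
begin

lemma T_iter_closed: "a \<in> X \<Longrightarrow> (T ^^ n) a \<in> X"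
  by (induction n) (auto simp: T_closed)

lemma T_iter_mono: "a \<in> X \<Longrightarrow> b \<in> X \<Longrightarrow> leq a b \<Longrightarrow> leq ((T ^^ n) a) ((T ^^ n) b)"
  by (induction n) (auto simp: T_mono T_iter_closed)

lemma T_iter_add: "(T ^^ i) ((T ^^ j) a) = (T ^^ (i + j)) a"
  by (simp add: funpow_add)

lemma le_T_iter_mult:
  assumes a: "a \<in> X" and le: "leq a ((T ^^ n) a)"
  shows "leq a ((T ^^ (k * n)) a)"
proof (induction k)
  case (Suc k)
  have "leq ((T ^^ (k * n)) a) ((T ^^ (k * n)) ((T ^^ n) a))"
    using T_iter_mono[OF a T_iter_closed[OF a] le] .
  then have "leq ((T ^^ (k * n)) a) ((T ^^ (Suc k * n)) a)"
    by (simp add: T_iter_add add.commute)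
  then show ?case
    using Suc trans a T_iter_closed by blast
qed (simp add: a refl)

lemma T_iter_mult_le:
  assumes a: "a \<in> X" and le: "leq ((T ^^ n) a) a"
  shows "leq ((T ^^ (k * n)) a) a"
proof (induction k)
  case (Suc k)
  have "leq ((T ^^ (k * n)) ((T ^^ n) a)) ((T ^^ (k * n)) a)"
    using T_iter_mono[OF T_iter_closed[OF a] a le] .
  then have "leq ((T ^^ (Suc k * n)) a) ((T ^^ (k * n)) a)"
    by (simp add: T_iter_add add.commute)
  then show ?case
    using Suc trans a T_iter_closed by blast
qed (simp add: a refl)

text \<open>Dominance forbids $T$ from moving any point strictly downwards: otherwise $T^n a \succ a$
  and $T^m a \preceq a$ would give $T^n a \preceq T^{mn} a \preceq a \preceq T^n a$.\<close>

lemma not_T_iter_le_self: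
  assumes a: "a \<in> X" and m: "1 \<le> m"
  shows "\<not> leq ((T ^^ m) a) a"
proof
  assume le: "leq ((T ^^ m) a) a"
  obtain n where up: "leq a ((T ^^ n) a)" and ne: "(T ^^ n) a \<noteq> a"
    using dominant[OF a a] by blast
  let ?b = "(T ^^ n) a"
  have b: "?b \<in> X"
    using a T_iter_closed by blast
  have "(m - 1) * n + n = m * n"
    using m by (simp add: diff_mult_distrib)
  then have "(T ^^ ((m - 1) * n)) ?b = (T ^^ (m * n)) a"
    by (simp only: T_iter_add)
  moreover have "leq ?b ((T ^^ ((m - 1) * n)) ?b)"
    using le_T_iter_mult[OF b T_iter_mono[OF a b up]] .
  moreover have "leq ((T ^^ (m * n)) a) a"
    using T_iter_mult_le[OF a le, of n] by (simp add: mult.commute)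
  ultimately have "leq ?b a"
    using trans a b T_iter_closed by metis
  then show False
    using antisym[OF a b up] ne by simp
qed

lemma T_iter_le_T_iter_imp_le:
  assumes a: "a \<in> X" and le: "leq ((T ^^ i) a) ((T ^^ j) a)"
  shows "i \<le> j"
proof (rule ccontr)
  assume "\<not> i \<le> j"
  then have "(T ^^ i) a = (T ^^ (i - j)) ((T ^^ j) a)" "1 \<le> i - j"
    by (simp_all add: T_iter_add)
  then show False
    using not_T_iter_le_self[OF T_iter_closed[OF a]] le by metis
qed

text \<open>\<open>shift_le a b m\<close> says $b \<preceq> T^m a$, read up to a common power of $T$ so that
  negative $m$ makes sense.\<close>

definition shift_le :: "'x \<Rightarrow> 'x \<Rightarrow> int \<Rightarrow> bool" where
  "shift_le a b m \<longleftrightarrow> (\<exists>i j::nat. int j - int i \<le> m \<and> leq ((T ^^ i) b) ((T ^^ j) a))"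

lemma shift_le_mono: "shift_le a b m \<Longrightarrow> m \<le> m' \<Longrightarrow> shift_le a b m'"
  unfolding shift_le_def by force

lemma shift_le_trans:
  assumes X: "a \<in> X" "b \<in> X" "c \<in> X" and ab: "shift_le a b m" and bc: "shift_le b c m'"
  shows "shift_le a c (m + m')"
proof -
  obtain i j where ij: "int j - int i \<le> m" "leq ((T ^^ i) b) ((T ^^ j) a)"
    using ab unfolding shift_le_def by blast
  obtain i' j' where ij': "int j' - int i' \<le> m'" "leq ((T ^^ i') c) ((T ^^ j') b)"
    using bc unfolding shift_le_def by blast
  have "leq ((T ^^ (i + i')) c) ((T ^^ (i + j')) b)"
    using T_iter_mono[OF T_iter_closed[OF X(3)] T_iter_closed[OF X(2)] ij'(2), of i]
    by (simp add: T_iter_add)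
  moreover have "leq ((T ^^ (i + j')) b) ((T ^^ (j + j')) a)"
    using T_iter_mono[OF T_iter_closed[OF X(2)] T_iter_closed[OF X(1)] ij(2), of j']
    by (simp add: T_iter_add add.commute)
  ultimately have "leq ((T ^^ (i + i')) c) ((T ^^ (j + j')) a)"
    using trans T_iter_closed X by blast
  moreover have "int (j + j') - int (i + i') \<le> m + m'"
    using ij ij' by simp
  ultimately show ?thesis
    unfolding shift_le_def by blast
qed

lemma shift_le_cycle_nonneg:
  assumes X: "a \<in> X" "b \<in> X" and "shift_le a b m" and "shift_le b a m'"
  shows "0 \<le> m + m'"
proof -
  obtain i j where "int j - int i \<le> m + m'" "leq ((T ^^ i) a) ((T ^^ j) a)"
    using shift_le_trans[OF X(1,2,1) assms(3,4)] unfolding shift_le_def by blast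
  then show ?thesis
    using T_iter_le_T_iter_imp_le[OF X(1)] by fastforce
qed

lemma shift_le_exists:
  assumes "a \<in> X" "b \<in> X"
  shows "\<exists>n::nat. shift_le a b (int n)"
proof -
  obtain n where "leq b ((T ^^ n) a)"
    using dominant[OF assms] by blast
  then have "shift_le a b (int n)"
    unfolding shift_le_def by (intro exI[of _ 0] exI[of _ n]) simp
  then show ?thesis
    by blast
qed

lemma shift_le_total:
  assumes X: "a \<in> X" "b \<in> X"
  shows "shift_le a b (t + int N) \<or> shift_le b a (int N - t)"
proof -
  define p where "p = nat (- t)"
  define q where "q = nat t"
  have pq: "int q - int p = t"
    unfolding p_def q_def by simp
  obtain k where "k \<le> N"
    and "leq ((T ^^ p) b) ((T ^^ k) ((T ^^ q) a)) \<or> leq ((T ^^ q) a) ((T ^^ k) ((T ^^ p) b))"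
    using quasi_total[OF T_iter_closed[OF X(2)] T_iter_closed[OF X(1)]] by blast
  then have "int (k + q) - int p \<le> t + int N \<and> leq ((T ^^ p) b) ((T ^^ (k + q)) a)
      \<or> int (k + p) - int q \<le> int N - t \<and> leq ((T ^^ q) a) ((T ^^ (k + p)) b)"
    using pq by (auto simp: T_iter_add)
  then show ?thesis
    unfolding shift_le_def by blast
qed

definition least_shift :: "'x \<Rightarrow> 'x \<Rightarrow> nat" where
  "least_shift a b = (LEAST k. shift_le a b (int k))"

definition displacement :: "'x \<Rightarrow> 'x \<Rightarrow> int" where
  "displacement a b = int (least_shift a b) - int (least_shift b a)"

lemma shift_le_least_shift: "a \<in> X \<Longrightarrow> b \<in> X \<Longrightarrow> shift_le a b (int (least_shift a b))"
  unfolding least_shift_def by (rule LeastI_ex[OF shift_le_exists])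

lemma not_shift_le_below_least_shift: "k < least_shift a b \<Longrightarrow> \<not> shift_le a b (int k)"
  unfolding least_shift_def by (rule not_less_Least)

lemma displacement_antisym: "displacement b a = - displacement a b"
  unfolding displacement_def by simp

text \<open>Just below the least shift, quasi-totality must hold the other way round.\<close>

lemma shift_le_displacement_lower:
  assumes X: "a \<in> X" "b \<in> X"
  shows "shift_le b a (- displacement a b + (2 * int N + 1))"
proof (cases "least_shift a b = 0")
  case True
  then show ?thesis
    using shift_le_mono[OF shift_le_least_shift[OF X(2,1)]] unfolding displacement_def by simp
next
  case False
  then have "\<not> shift_le a b ((int (least_shift a b) - 1 - int N) + int N)"
    using not_shift_le_below_least_shift[of "least_shift a b - 1" a b] by (simp add: of_nat_diff)
  then have "shift_le b a (int N - (int (least_shift a b) - 1 - int N))"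
    using shift_le_total[OF X] by blast
  then show ?thesis
    unfolding displacement_def by (rule shift_le_mono) simp
qed

lemma shift_le_displacement_upper:
  assumes "a \<in> X" "b \<in> X"
  shows "shift_le a b (displacement a b + (2 * int N + 1))"
  using shift_le_displacement_lower[OF assms(2,1)] unfolding displacement_antisym[of b a] by simp

lemma displacement_quasi_additive:
  assumes X: "a \<in> X" "b \<in> X" "c \<in> X"
  shows "\<bar>displacement a c - displacement a b - displacement b c\<bar> \<le> 3 * (2 * int N + 1)"
proof -
  let ?c = "2 * int N + 1"
  have "shift_le a c (displacement a b + ?c + (displacement b c + ?c))"
    using shift_le_trans[OF X shift_le_displacement_upper[OF X(1,2)] shift_le_displacement_upper[OF X(2,3)]] .
  from shift_le_cycle_nonneg[OF X(1,3) this shift_le_displacement_lower[OF X(1,3)]]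
  have "0 \<le> displacement a b + displacement b c - displacement a c + 3 * ?c"
    by simp
  moreover have "shift_le a b (displacement a c + ?c + (- displacement b c + ?c))"
    using shift_le_trans[OF X(1,3,2) shift_le_displacement_upper[OF X(1,3)]
        shift_le_displacement_lower[OF X(2,3)]] .
  from shift_le_cycle_nonneg[OF X(1,2) this shift_le_displacement_lower[OF X(1,2)]]
  have "0 \<le> displacement a c - displacement b c - displacement a b + 3 * ?c"
    by simp
  ultimately show ?thesis
    by (simp add: abs_le_iff)
qed

end

locale qt_action = qt_triple X leq T N + group_action G X act
  for X :: "'x set" and leq T N and G :: "('g, 'b) monoid_scheme" (structure) and act +
  assumes act_mono: "g \<in> carrier G \<Longrightarrow> a \<in> X \<Longrightarrow> b \<in> X \<Longrightarrow> leq a b \<Longrightarrow> leq (act g a) (act g b)"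
    and act_T: "g \<in> carrier G \<Longrightarrow> x \<in> X \<Longrightarrow> act g (T x) = T (act g x)"
begin

sublocale group G
  using group_hom by (simp add: group_hom_def)

lemma act_closed: "g \<in> carrier G \<Longrightarrow> x \<in> X \<Longrightarrow> act g x \<in> X"
  using element_image by blast

lemma act_T_iter: "g \<in> carrier G \<Longrightarrow> x \<in> X \<Longrightarrow> act g ((T ^^ n) x) = (T ^^ n) (act g x)"
  by (induction n) (auto simp: act_T T_iter_closed)

lemma act_inv_act: "g \<in> carrier G \<Longrightarrow> x \<in> X \<Longrightarrow> act (inv g) (act g x) = x"
  using composition_rule[of x "inv g" g] fun_cong[OF id_eq_one, of x] by simp

lemma act_le_iff:
  assumes "g \<in> carrier G" "a \<in> X" "b \<in> X"
  shows "leq (act g a) (act g b) \<longleftrightarrow> leq a b"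
  using act_mono[of "inv g" "act g a" "act g b"] act_mono[of g a b] assms
  by (auto simp: act_closed act_inv_act)

lemma shift_le_act_iff:
  assumes g: "g \<in> carrier G" and X: "a \<in> X" "b \<in> X"
  shows "shift_le (act g a) (act g b) m \<longleftrightarrow> shift_le a b m"
  unfolding shift_le_def
  using act_le_iff[OF g T_iter_closed T_iter_closed] act_T_iter[OF g] X by simp

lemma displacement_act:
  assumes "g \<in> carrier G" "a \<in> X" "b \<in> X"
  shows "displacement (act g a) (act g b) = displacement a b"
  unfolding displacement_def least_shift_def using shift_le_act_iff assms by simp

lemma orbit_displacement_quasi_additive:
  assumes x: "x \<in> X" and g: "g \<in> carrier G" and h: "h \<in> carrier G"
  shows "\<bar>displacement x (act (g \<otimes> h) x) - displacement x (act g x) - displacement x (act h x)\<bar>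
    \<le> 3 * (2 * int N + 1)"
proof -
  have "displacement (act g x) (act g (act h x)) = displacement x (act h x)"
    using displacement_act g h x act_closed by simp
  then show ?thesis
    using displacement_quasi_additive[of x "act g x" "act g (act h x)"] composition_rule[OF x g h]
      act_closed g h x by simp
qed

lemma orbit_displacement_growth:
  assumes x: "x \<in> X" and g: "g \<in> carrier G" and le: "leq ((T ^^ n) x) (act g x)"
  shows "int (k * n) - (2 * int N + 1) \<le> displacement x (act (g [^] k) x)"
proof -
  have "leq ((T ^^ (k * n)) x) (act (g [^] k) x)"
  proof (induction k)
    case (Suc k)
    have gk: "g [^] k \<in> carrier G"
      using g by simp
    have "leq ((T ^^ n) ((T ^^ (k * n)) x)) ((T ^^ n) (act (g [^] k) x))"
      using T_iter_mono[OF T_iter_closed[OF x] act_closed[OF gk x] Suc] .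
    moreover have "leq (act (g [^] k) ((T ^^ n) x)) (act (g [^] k) (act g x))"
      using act_mono[OF gk _ _ le] x g T_iter_closed act_closed by blast
    ultimately have "leq ((T ^^ (Suc k * n)) x) (act (g [^] k) (act g x))"
      using trans T_iter_closed act_closed x g gk act_T_iter[OF gk x]
      by (metis T_iter_add add.commute mult_Suc)
    then show ?case
      using composition_rule[OF x gk g] by simp
  qed (simp add: x refl flip: id_eq_one)
  then have "shift_le (act (g [^] k) x) x (- int (k * n))"
    unfolding shift_le_def by (intro exI[of _ "k * n"] exI[of _ 0]) simp
  from shift_le_cycle_nonneg[OF x act_closed[OF _ x] shift_le_displacement_upper[OF x act_closed[OF _ x]] this]
  show ?thesis
    using g by simp
qed

lemma exists_nonzero_hom_quasimorphism:
  assumes g: "g \<in> carrier G" and x: "x \<in> X" and n: "1 \<le> n" and le: "leq ((T ^^ n) x) (act g x)"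
  shows "\<exists>f. hom_quasimorphism G f \<and> (\<exists>h\<in>carrier G. f h \<noteq> 0)"
proof -
  define q where "q h = real_of_int (displacement x (act h x))" for h
  interpret quasimorphism G q "real_of_int (3 * (2 * int N + 1))"
  proof unfold_locales
    fix h k assume "h \<in> carrier G" "k \<in> carrier G"
    then have "real_of_int \<bar>displacement x (act (h \<otimes> k) x) - displacement x (act h x) - displacement x (act k x)\<bar>
        \<le> real_of_int (3 * (2 * int N + 1))"
      using orbit_displacement_quasi_additive[OF x] by (simp only: of_int_le_iff)
    then show "\<bar>q (h \<otimes> k) - q h - q k\<bar> \<le> real_of_int (3 * (2 * int N + 1))"
      unfolding q_def by simp
  qed
  have growth: "real k * 1 - real_of_int (2 * int N + 1) \<le> q (g [^] k)" for k
  proof -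
    have "int k \<le> int (k * n)"
      using n by (intro of_nat_mono) simp
    then show ?thesis
      using orbit_displacement_growth[OF x g le, of k] unfolding q_def by linarith
  qed
  have "homogenization g \<noteq> 0"
    using homogenization_nonzero[OF g _ growth] by simp
  then show ?thesis
    using hom_quasimorphism_homogenization g by blast
qed

end

lemma (in group) dominating_action_imp_nonzero_hom_quasimorphism:
  assumes "quasi_total_triple X leq T" and "dominating_action G act X leq T"
  shows "\<exists>f. hom_quasimorphism G f \<and> (\<exists>h\<in>carrier G. f h \<noteq> 0)"
proof -
  obtain N where "qt_triple X leq T N"
    using assms(1) by (rule quasi_total_triple_imp_qt_triple)
  moreover have "group_action G X act" and "qt_action_axioms X leq T G act"
    using assms(2) unfolding dominating_action_def order_preserving_bij_def qt_action_axioms_def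
    by blast+
  ultimately have "qt_action X leq T N G act"
    by (intro qt_action.intro)
  moreover obtain g x n where "g \<in> carrier G" "x \<in> X" "1 \<le> n" "leq ((T ^^ n) x) (act g x)"
    using assms(2) unfolding dominating_action_def by blast
  ultimately show ?thesis
    by (rule qt_action.exists_nonzero_hom_quasimorphism)
qed

theorem corollary1p9:
  fixes G :: "('g, 'b) monoid_scheme"
  assumes "group G"
  shows "((\<exists>f. hom_quasimorphism G f \<and> (\<exists>h\<in>carrier G. f h \<noteq> 0)) \<longrightarrow>
            (\<exists>(X :: 'g set) leq T act. quasi_total_triple X leq T \<and> dominating_action G act X leq T))
       \<and> ((\<exists>(X :: 'x set) leq T act. quasi_total_triple X leq T \<and> dominating_action G act X leq T) \<longrightarrow>
            (\<exists>f. hom_quasimorphism G f \<and> (\<exists>h\<in>carrier G. f h \<noteq> 0)))"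
proof (intro conjI impI)
  assume "\<exists>f. hom_quasimorphism G f \<and> (\<exists>h\<in>carrier G. f h \<noteq> 0)"
  then show "\<exists>(X :: 'g set) leq T act. quasi_total_triple X leq T \<and> dominating_action G act X leq T"
    using group.nonzero_hom_quasimorphism_imp_dominating_action[OF assms] by blast
next
  assume "\<exists>(X :: 'x set) leq T act. quasi_total_triple X leq T \<and> dominating_action G act X leq T"
  then show "\<exists>f. hom_quasimorphism G f \<and> (\<exists>h\<in>carrier G. f h \<noteq> 0)"
    using group.dominating_action_imp_nonzero_hom_quasimorphism[OF assms] by blast
qed

end
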